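(* For every $n \ge 2$, the $n$-crown poset $X_n$ is 2-chain-retractable to the 2-chain, i.e. $X_n \oslash C_2 \cong C_2$ and $X_n \not\cong C_2$, where $C_2$ is the 2-chain.
   Context: The 2-chain $C_2$ is the poset $\{x<y\}$. The $n$-crown poset $X_n$ ($n\ge2$) has elements $a_1,\dots,a_n,b_1,\dots,b_n$ with order relations exactly $a_i<b_j$ for all $i\ne j$ (besides reflexivity). Notation: $\ell(X)$ is the cardinality of a longest chain of a poset $X$. A subset $A$ of a poset $X$ is maximally ordered in $X$ if $|\{(a,b)\in A\times A:a<b\}|$ is maximal among subsets of $X$ of cardinality $|A|$. For $\sigma\in\mathrm{Aut}(P)$, $\Sigma(\sigma)=\{a:\sigma(a)\ne a\}$. For a finite poset $Q$ and $r\ge2$: $\sigma\in\mathrm{Aut}(P)$ is a $(Q,r)$-generator if there exist subsets $S_0,\dots,S_{r-1}\subset\Sigma(\sigma)$, each isomorphic to $Q$, which are smallest maximally ordered subsets of $\Sigma(\sigma)$ with $\sigma(S_i)=S_{(i+1)\bmod r}$, $\ell(S_i)=\ell(\Sigma(\sigma))$, $\bigcup_iS_i=\Sigma(\sigma)$; distinct $S_i,S_j$ are $(Q,r)$-symmetric subsets. Elements $a,b$ are $(Q,r,0)$-symmetric if $a=b$; $(Q,r,1)$-symmetric if there are $(Q,r)$-symmetric subsets $A,B$ with generator $\sigma$, $a\in A$, $b=\sigma^q(a)\in B$, $1\le q<r$; for $n\ge2$, $(Q,r,n)$-symmetric if not $(Q,r,j)$-symmetric for $j<n$ but there exist $c$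 and $j<n$ with $a$ $(Q,r,j)$-symmetric to $c$ and $c$ $(Q,r,n-j)$-symmetric to $b$; $(Q,r)$-symmetric if $(Q,r,n)$-symmetric for some $n\ge0$ (an equivalence relation). $P\oslash_rQ$ is the quotient poset of the equivalence classes with $E\le F$ iff some $e\in E$, $f\in F$ satisfy $e\le f$; $P\oslash Q$ means $P\oslash_2Q$. $P$ is $(Q,r)$-retractable to $\tilde P$ if $P\oslash_rQ\cong\tilde P$ and $P\oslash_rQ\not\cong P$. *)

theory Defs
  imports Main
begin

type_synonym 'a poset = "'a set \<times> ('a \<Rightarrow> 'a \<Rightarrow> bool)"

definition carrier_of :: "'a poset \<Rightarrow> 'a set" where "carrier_of P = fst P"
definition leq :: "'a poset \<Rightarrow> 'a \<Rightarrow> 'a \<Rightarrow> bool" where "leq P = snd P"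
definition less :: "'a poset \<Rightarrow> 'a \<Rightarrow> 'a \<Rightarrow> bool" where
  "less P x y \<longleftrightarrow> leq P x y \<and> x \<noteq> y"

definition induced :: "'a poset \<Rightarrow> 'a set \<Rightarrow> 'a poset" where
  "induced P A = (A, leq P)"

definition poset_iso :: "'a poset \<Rightarrow> 'b poset \<Rightarrow> bool" where
  "poset_iso P P' \<longleftrightarrow> (\<exists>f. bij_betw f (carrier_of P) (carrier_of P') \<and>
     (\<forall>x\<in>carrier_of P. \<forall>y\<in>carrier_of P. leq P x y \<longleftrightarrow> leq P' (f x) (f y)))"

definition aut :: "'a poset \<Rightarrow> ('a \<Rightarrow> 'a) \<Rightarrow> bool" where
  "aut P \<sigma> \<longleftrightarrow> bij_betw \<sigma> (carrier_of P) (carrier_of P) \<and>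
     (\<forall>x\<in>carrier_of P. \<forall>y\<in>carrier_of P. leq P x y \<longleftrightarrow> leq P (\<sigma> x) (\<sigma> y))"

definition moved :: "'a poset \<Rightarrow> ('a \<Rightarrow> 'a) \<Rightarrow> 'a set" where
  "moved P \<sigma> = {a \<in> carrier_of P. \<sigma> a \<noteq> a}"

definition is_chain :: "'a poset \<Rightarrow> 'a set \<Rightarrow> bool" where
  "is_chain P C \<longleftrightarrow> (\<forall>x\<in>C. \<forall>y\<in>C. leq P x y \<or> leq P y x)"

definition chain_len :: "'a poset \<Rightarrow> 'a set \<Rightarrow> nat" where
  "chain_len P A = Max {card C | C. C \<subseteq> A \<and> is_chain P C}"

definition n_rel :: "'a poset \<Rightarrow> 'a set \<Rightarrow> nat" where
  "n_rel P A = card {(a, b). a \<in> A \<and> b \<in> A \<and> less P a b}"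

definition max_ordered :: "'a poset \<Rightarrow> 'a set \<Rightarrow> 'a set \<Rightarrow> bool" where
  "max_ordered P X A \<longleftrightarrow> A \<subseteq> X \<and>
     (\<forall>B. B \<subseteq> X \<and> card B = card A \<longrightarrow> n_rel P B \<le> n_rel P A)"

definition smallest_max_ordered :: "'a poset \<Rightarrow> 'a set \<Rightarrow> 'a set \<Rightarrow> bool" where
  "smallest_max_ordered P X A \<longleftrightarrow> max_ordered P X A \<and> chain_len P A = chain_len P X \<and>
     (\<forall>T. max_ordered P X T \<and> chain_len P T = chain_len P X \<longrightarrow> card A \<le> card T)"

definition generator_family ::
    "'a poset \<Rightarrow> 'b poset \<Rightarrow> nat \<Rightarrow> ('a \<Rightarrow> 'a) \<Rightarrow> (nat \<Rightarrow> 'a set) \<Rightarrow> bool" where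
  "generator_family P Q r \<sigma> S \<longleftrightarrow> 2 \<le> r \<and> aut P \<sigma> \<and>
     (\<forall>i<r. S i \<subseteq> moved P \<sigma> \<and> poset_iso (induced P (S i)) Q \<and>
            smallest_max_ordered P (moved P \<sigma>) (S i) \<and>
            \<sigma> ` S i = S ((i + 1) mod r) \<and>
            chain_len P (S i) = chain_len P (moved P \<sigma>)) \<and>
     (\<Union>i<r. S i) = moved P \<sigma>"

definition sym1 :: "'a poset \<Rightarrow> 'b poset \<Rightarrow> nat \<Rightarrow> 'a \<Rightarrow> 'a \<Rightarrow> bool" where
  "sym1 P Q r a b \<longleftrightarrow> (\<exists>\<sigma> S i j q. generator_family P Q r \<sigma> S \<and> i < r \<and> j < r \<and>
      S i \<noteq> S j \<and> a \<in> S i \<and> b \<in> S j \<and> 1 \<le> q \<and> q < r \<and> b = (\<sigma> ^^ q) a)"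

text \<open>(Q,r)-symmetry: being (Q,r,n)-symmetric for some n; the level-n relations
  (level 0 = equality, level n = composition of lower levels) together give exactly the
  reflexive transitive closure of level 1, restricted to the carrier.\<close>
definition qr_sym :: "'a poset \<Rightarrow> 'b poset \<Rightarrow> nat \<Rightarrow> 'a \<Rightarrow> 'a \<Rightarrow> bool" where
  "qr_sym P Q r a b \<longleftrightarrow> a \<in> carrier_of P \<and> b \<in> carrier_of P \<and> (sym1 P Q r)\<^sup>*\<^sup>* a b"

definition quot :: "'a poset \<Rightarrow> 'b poset \<Rightarrow> nat \<Rightarrow> 'a set poset" where
  "quot P Q r = (carrier_of P // {(a, b). qr_sym P Q r a b},
                 (\<lambda>E F. \<exists>e\<in>E. \<exists>f\<in>F. leq P e f))"

definition retractable :: "'a poset \<Rightarrow> 'b poset \<Rightarrow> nat \<Rightarrow> 'c poset \<Rightarrow> bool" where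
  "retractable P Q r Pt \<longleftrightarrow> poset_iso (quot P Q r) Pt \<and> \<not> poset_iso (quot P Q r) P"

definition chain2 :: "nat poset" where
  "chain2 = ({0, 1}, (\<le>))"

text \<open>The n-crown: (False,i) = a_i, (True,i) = b_i, i = 1..n; a_i < b_j iff i \<noteq> j.\<close>
definition crown :: "nat \<Rightarrow> (bool \<times> nat) poset" where
  "crown n = (UNIV \<times> {1..n},
     (\<lambda>x y. x = y \<or> (\<not> fst x \<and> fst y \<and> snd x \<noteq> snd y)))"

end

theory Submission
  imports Defs "HOL-Combinatorics.Transposition"
begin

text \<open>Every element of the crown \<open>X\<^sub>n\<close> (\<open>n \<ge> 2\<close>) is strictly comparable to another one, so
  automorphisms preserve the two sides \<open>{a\<^sub>i}\<close> and \<open>{b\<^sub>i}\<close>, and no \<open>(C\<^sub>2,2)\<close>-symmetry can relate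
  an \<open>a\<^sub>i\<close> to a \<open>b\<^sub>j\<close>. Conversely, transposing two indices \<open>i \<noteq> j\<close> moves exactly
  \<open>a\<^sub>i, a\<^sub>j, b\<^sub>i, b\<^sub>j\<close> and is a \<open>(C\<^sub>2,2)\<close>-generator with symmetric subsets \<open>{a\<^sub>i < b\<^sub>j}\<close> and
  \<open>{a\<^sub>j < b\<^sub>i}\<close>, which relates \<open>a\<^sub>i\<close> to \<open>a\<^sub>j\<close> and \<open>b\<^sub>i\<close> to \<open>b\<^sub>j\<close>. Hence the quotient consists of
  the two sides with \<open>{a\<^sub>i} < {b\<^sub>i}\<close>, a 2-chain, while \<open>X\<^sub>n\<close> has \<open>2n \<ge> 4\<close> elements.\<close>

lemma carrier_chain2 [simp]: "carrier_of chain2 = {0, 1}"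
  by (simp add: carrier_of_def chain2_def)

lemma leq_chain2 [simp]: "leq chain2 = (\<le>)"
  by (simp add: leq_def chain2_def)

lemma poset_iso_card_eq: "poset_iso P P' \<Longrightarrow> card (carrier_of P) = card (carrier_of P')"
  unfolding poset_iso_def using bij_betw_same_card by blast

lemma poset_iso_chain2I:
  assumes "carrier_of P = {E, F}" "E \<noteq> F"
    and "leq P E E" "leq P F F" "leq P E F" "\<not> leq P F E"
  shows "poset_iso P chain2"
  unfolding poset_iso_def
proof (intro exI[of _ "\<lambda>X. if X = E then 0 else 1 :: nat"] conjI)
  show "bij_betw (\<lambda>X. if X = E then 0 else 1 :: nat) (carrier_of P) (carrier_of chain2)"
    using assms(1,2) by (auto simp: bij_betw_def inj_on_def)
  show "\<forall>x\<in>carrier_of P. \<forall>y\<in>carrier_of P.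
      leq P x y \<longleftrightarrow> leq chain2 (if x = E then 0 else 1) (if y = E then 0 else 1)"
    using assms by auto
qed

lemma leq_quot: "leq (quot P Q r) E F \<longleftrightarrow> (\<exists>e\<in>E. \<exists>f\<in>F. leq P e f)"
  by (simp add: quot_def leq_def)

lemma aut_less:
  assumes "aut P \<sigma>" "x \<in> carrier_of P" "y \<in> carrier_of P" "less P x y"
  shows "less P (\<sigma> x) (\<sigma> y)"
proof -
  have "inj_on \<sigma> (carrier_of P)"
    using assms(1) bij_betw_imp_inj_on unfolding aut_def by blast
  then show ?thesis
    using assms unfolding aut_def less_def by (metis inj_on_contraD)
qed

lemma aut_funpow_in_carrier:
  assumes "aut P \<sigma>" "x \<in> carrier_of P"
  shows "(\<sigma> ^^ q) x \<in> carrier_of P"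
  using assms by (induction q) (auto simp: aut_def bij_betw_apply)

lemma finite_chain_cards: "finite A \<Longrightarrow> finite {card C | C. C \<subseteq> A \<and> is_chain P C}"
  by (rule finite_subset[of _ "card ` Pow A"]) auto

lemma chain_len_le:
  assumes "finite A" "\<And>C. C \<subseteq> A \<Longrightarrow> is_chain P C \<Longrightarrow> card C \<le> k"
  shows "chain_len P A \<le> k"
proof -
  have "is_chain P {}"
    by (simp add: is_chain_def)
  then have "0 \<in> {card C | C. C \<subseteq> A \<and> is_chain P C}"
    by force
  then show ?thesis
    unfolding chain_len_def using assms finite_chain_cards by (intro Max.boundedI) auto
qed

lemma card_le_chain_len:
  assumes "finite A" "C \<subseteq> A" "is_chain P C"
  shows "card C \<le> chain_len P A"
  unfolding chain_len_def using assms finite_chain_cards by (intro Max_ge) auto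

lemma chain_len_le_card: "finite A \<Longrightarrow> chain_len P A \<le> card A"
  by (rule chain_len_le) (auto intro: card_mono)

lemma n_rel_doubleton_le_1:
  assumes "antisymp_on {x, y} (leq P)"
  shows "n_rel P {x, y} \<le> 1"
proof -
  let ?pick = "if less P x y then {(x, y)} else {(y, x)}"
  have "{(a, b). a \<in> {x, y} \<and> b \<in> {x, y} \<and> less P a b} \<subseteq> ?pick"
    using assms by (auto simp: less_def antisymp_on_def)
  then have "n_rel P {x, y} \<le> card ?pick"
    unfolding n_rel_def by (intro card_mono) auto
  then show ?thesis by (simp split: if_splits)
qed

lemma n_rel_doubleton_eq_1:
  assumes "less P x y" "antisymp_on {x, y} (leq P)"
  shows "n_rel P {x, y} = 1"
proof -
  have "{(a, b). a \<in> {x, y} \<and> b \<in> {x, y} \<and> less P a b} = {(x, y)}"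
    using assms by (auto simp: less_def antisymp_on_def)
  then show ?thesis unfolding n_rel_def by simp
qed

lemma smallest_max_ordered_doubletonI:
  assumes "finite X" "reflp_on X (leq P)" "antisymp_on X (leq P)" "chain_len P X = 2"
    and "x \<in> X" "y \<in> X" "less P x y"
  shows "smallest_max_ordered P X {x, y}"
proof -
  have card_xy: "card {x, y} = 2"
    using \<open>less P x y\<close> by (simp add: less_def)
  have "n_rel P B \<le> n_rel P {x, y}" if "B \<subseteq> X" "card B = 2" for B
  proof -
    obtain u v where B: "B = {u, v}"
      using \<open>card B = 2\<close> card_2_iff by metis
    have "n_rel P B \<le> 1"
      unfolding B using antisymp_on_subset[OF assms(3)] that(1) B
      by (intro n_rel_doubleton_le_1) auto
    moreover have "n_rel P {x, y} = 1"
      using antisymp_on_subset[OF assms(3)] assms(5-7)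
      by (intro n_rel_doubleton_eq_1) auto
    ultimately show ?thesis by simp
  qed
  then have max_xy: "max_ordered P X {x, y}"
    unfolding max_ordered_def using assms card_xy by auto
  have "is_chain P {x, y}"
    using assms unfolding is_chain_def reflp_on_def less_def by auto
  then have "2 \<le> chain_len P {x, y}"
    using card_le_chain_len[of "{x, y}" "{x, y}" P] card_xy by simp
  then have chain_len_xy: "chain_len P {x, y} = 2"
    using chain_len_le_card[of "{x, y}" P] card_xy by simp
  have "2 \<le> card T" if "max_ordered P X T" "chain_len P T = 2" for T
  proof -
    have "finite T"
      using that(1) \<open>finite X\<close> finite_subset unfolding max_ordered_def by blast
    then show ?thesis using chain_len_le_card[of T P] that(2) by simp
  qed
  then show ?thesis
    unfolding smallest_max_ordered_def using max_xy chain_len_xy card_xy assms(4) by auto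
qed

lemma carrier_crown [simp]: "carrier_of (crown n) = UNIV \<times> {1..n}"
  by (simp add: carrier_of_def crown_def)

lemma leq_crown [simp]:
  "leq (crown n) x y \<longleftrightarrow> x = y \<or> (\<not> fst x \<and> fst y \<and> snd x \<noteq> snd y)"
  by (simp add: leq_def crown_def)

lemma less_crown [simp]: "less (crown n) x y \<longleftrightarrow> \<not> fst x \<and> fst y \<and> snd x \<noteq> snd y"
  by (auto simp: less_def)

lemma card_carrier_crown: "card (carrier_of (crown n)) = 2 * n"
  by (simp add: card_cartesian_product)

lemma reflp_on_crown: "reflp_on A (leq (crown n))"
  by (simp add: reflp_on_def)

lemma antisymp_on_crown: "antisymp_on A (leq (crown n))"
  by (auto simp: antisymp_on_def)

lemma crown_chain_card_le_2:
  assumes "is_chain (crown n) C"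
  shows "card C \<le> 2"
proof -
  have "inj_on fst C"
    using assms by (auto simp: inj_on_def is_chain_def)
  then have "card C = card (fst ` C)"
    by (simp add: card_image)
  also have "\<dots> \<le> card (UNIV :: bool set)"
    by (rule card_mono) auto
  finally show ?thesis by simp
qed

lemma chain_len_crown:
  assumes "finite A" "(False, p) \<in> A" "(True, q) \<in> A" "p \<noteq> q"
  shows "chain_len (crown n) A = 2"
proof (rule antisym)
  show "chain_len (crown n) A \<le> 2"
    using assms(1) crown_chain_card_le_2 by (rule chain_len_le)
  have "is_chain (crown n) {(False, p), (True, q)}"
    using assms(4) by (auto simp: is_chain_def)
  then show "2 \<le> chain_len (crown n) A"
    using card_le_chain_len[of A "{(False, p), (True, q)}" "crown n"] assms by simp
qed

lemma poset_iso_crown_edge_chain2: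
  "p \<noteq> q \<Longrightarrow> poset_iso (induced (crown n) {(False, p), (True, q)}) chain2"
  by (rule poset_iso_chain2I) (auto simp: induced_def carrier_of_def leq_def crown_def)

lemma aut_crown_transpose:
  assumes "i \<in> {1..n}" "j \<in> {1..n}"
  shows "aut (crown n) (apsnd (transpose i j))"
  unfolding aut_def
proof
  show "bij_betw (apsnd (transpose i j)) (carrier_of (crown n)) (carrier_of (crown n))"
    by (rule bij_betw_byWitness[where f' = "apsnd (transpose i j)"])
      (use assms in \<open>auto simp: transpose_def\<close>)
  show "\<forall>x\<in>carrier_of (crown n). \<forall>y\<in>carrier_of (crown n).
      leq (crown n) x y \<longleftrightarrow> leq (crown n) (apsnd (transpose i j) x) (apsnd (transpose i j) y)"
    by (auto simp: prod_eq_iff transpose_eq_iff)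
qed

lemma crown_transpose_generator:
  assumes "i \<in> {1..n}" "j \<in> {1..n}" "i \<noteq> j"
  shows "generator_family (crown n) chain2 2 (apsnd (transpose i j))
           (\<lambda>k. if k = 0 then {(False, i), (True, j)} else {(False, j), (True, i)})"
proof -
  let ?\<sigma> = "apsnd (transpose i j)"
  let ?S = "\<lambda>k::nat. if k = 0 then {(False, i), (True, j)} else {(False, j), (True, i)}"
  have moved: "moved (crown n) ?\<sigma> = UNIV \<times> {i, j}"
    using assms by (auto simp: moved_def transpose_def split: if_splits)
  have chain_len_moved: "chain_len (crown n) (UNIV \<times> {i, j}) = 2"
    using assms by (intro chain_len_crown) auto
  have symmetric_subset:
    "?S k \<subseteq> moved (crown n) ?\<sigma> \<and> poset_iso (induced (crown n) (?S k)) chain2 \<and>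
     smallest_max_ordered (crown n) (moved (crown n) ?\<sigma>) (?S k) \<and>
     chain_len (crown n) (?S k) = chain_len (crown n) (moved (crown n) ?\<sigma>)" for k
  proof -
    obtain p q where pq: "?S k = {(False, p), (True, q)}" "p \<noteq> q" "p \<in> {i, j}" "q \<in> {i, j}"
      using assms(3) by (cases "k = 0") auto
    have "poset_iso (induced (crown n) (?S k)) chain2"
      unfolding pq(1) using pq(2) by (rule poset_iso_crown_edge_chain2)
    moreover have "smallest_max_ordered (crown n) (UNIV \<times> {i, j}) (?S k)"
      unfolding pq(1) using pq(2-4) chain_len_moved
      by (intro smallest_max_ordered_doubletonI reflp_on_crown antisymp_on_crown) auto
    moreover have "chain_len (crown n) (?S k) = 2"
      unfolding pq(1) using pq(2) by (intro chain_len_crown) auto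
    ultimately show ?thesis
      unfolding moved using pq chain_len_moved by auto
  qed
  have rotate: "?\<sigma> ` ?S k = ?S ((k + 1) mod 2)" if "k < 2" for k
  proof -
    from that consider "k = 0" | "k = 1" by linarith
    then show ?thesis by cases auto
  qed
  have "{..<2::nat} = {0, 1}" by auto
  then have union: "(\<Union>k<2. ?S k) = moved (crown n) ?\<sigma>"
    unfolding moved by auto
  show ?thesis
    unfolding generator_family_def
    using aut_crown_transpose[OF assms(1,2)] symmetric_subset rotate union by blast
qed

lemma crown_sym1_of_same_side:
  assumes "(s, p) \<in> carrier_of (crown n)" "(s, q) \<in> carrier_of (crown n)" "p \<noteq> q"
  shows "sym1 (crown n) chain2 2 (s, p) (s, q)"
proof -
  let ?S = "\<lambda>k. if k = 0 then {(False, p), (True, q)} else {(False, q), (True, p)}"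
  have "generator_family (crown n) chain2 2 (apsnd (transpose p q)) ?S"
    using assms by (intro crown_transpose_generator) auto
  \<comment> \<open>\<open>(False, p)\<close> lies in \<open>?S 0\<close> and \<open>(True, p)\<close> in \<open>?S 1\<close>\<close>
  then show ?thesis
    unfolding sym1_def using assms
    by (intro exI[of _ "apsnd (transpose p q)"] exI[of _ ?S] exI[of _ "of_bool s"]
        exI[of _ "of_bool (\<not> s)"] exI[of _ 1]) auto
qed

lemma crown_aut_preserves_side:
  assumes "2 \<le> n" "aut (crown n) \<sigma>" "x \<in> carrier_of (crown n)"
  shows "fst (\<sigma> x) = fst x"
proof -
  obtain s k where x: "x = (s, k)" and k: "k \<in> {1..n}"
    using assms(3) by auto
  define j where "j = (if k = 1 then 2 else 1 :: nat)"
  have j: "j \<in> {1..n}" "j \<noteq> k"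
    using assms(1) k by (auto simp: j_def)
  show ?thesis
  proof (cases s)
    case False
    then have "less (crown n) x (True, j)"
      using x j by simp
    then show ?thesis
      using aut_less[OF assms(2,3)] j False x by force
  next
    case True
    then have "less (crown n) (False, j) x"
      using x j by simp
    then show ?thesis
      using aut_less[OF assms(2) _ assms(3)] j True x by force
  qed
qed

lemma crown_sym1_same_side:
  assumes "2 \<le> n" "sym1 (crown n) Q r x y"
  shows "fst x = fst y"
proof -
  obtain \<sigma> S i q where gen: "generator_family (crown n) Q r \<sigma> S"
    and "i < r" "x \<in> S i" and y: "y = (\<sigma> ^^ q) x"
    using assms(2) unfolding sym1_def by blast
  then have \<sigma>: "aut (crown n) \<sigma>" and x: "x \<in> carrier_of (crown n)"
    unfolding generator_family_def moved_def by blast+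
  have "fst ((\<sigma> ^^ q) x) = fst x"
  proof (induction q)
    case (Suc q)
    then show ?case
      using crown_aut_preserves_side[OF assms(1) \<sigma> aut_funpow_in_carrier[OF \<sigma> x]] by simp
  qed simp
  then show ?thesis using y by simp
qed

lemma qr_sym_crown_iff:
  assumes "2 \<le> n"
  shows "qr_sym (crown n) chain2 2 x y \<longleftrightarrow>
    x \<in> carrier_of (crown n) \<and> y \<in> carrier_of (crown n) \<and> fst x = fst y"
proof
  assume "qr_sym (crown n) chain2 2 x y"
  moreover from this have "(sym1 (crown n) chain2 2)\<^sup>*\<^sup>* x y"
    unfolding qr_sym_def by blast
  then have "fst x = fst y"
    by (induction rule: rtranclp_induct) (auto dest: crown_sym1_same_side[OF assms])
  ultimately show "x \<in> carrier_of (crown n) \<and> y \<in> carrier_of (crown n) \<and> fst x = fst y"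
    unfolding qr_sym_def by blast
next
  assume "x \<in> carrier_of (crown n) \<and> y \<in> carrier_of (crown n) \<and> fst x = fst y"
  then show "qr_sym (crown n) chain2 2 x y"
    unfolding qr_sym_def
    using crown_sym1_of_same_side[of "fst x" "snd x" n "snd y"] by (cases "x = y") auto
qed

lemma carrier_quot_crown:
  assumes "2 \<le> n"
  shows "carrier_of (quot (crown n) chain2 2) = {{False} \<times> {1..n}, {True} \<times> {1..n}}"
proof -
  have "{(a, b). qr_sym (crown n) chain2 2 a b} `` {x} = {fst x} \<times> {1..n}"
    if "x \<in> carrier_of (crown n)" for x
    using that by (auto simp: qr_sym_crown_iff[OF assms])
  moreover have "(False, 1) \<in> carrier_of (crown n)"
    using assms by simp
  ultimately show ?thesis
    unfolding quot_def quotient_def by (auto simp: carrier_of_def crown_def)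
qed

theorem mainTheorem6:
  fixes n :: nat
  assumes "2 \<le> n"
  shows "retractable (crown n) chain2 2 chain2 \<and> \<not> poset_iso (crown n) chain2"
proof -
  let ?A = "{False} \<times> {1..n}" and ?B = "{True} \<times> {1..n}"
  have a: "(False, 1) \<in> ?A" and b: "(True, 2) \<in> ?B"
    using assms by auto
  have "poset_iso (quot (crown n) chain2 2) chain2"
  proof (rule poset_iso_chain2I[OF carrier_quot_crown[OF assms]])
    show "?A \<noteq> ?B"
      using a by blast
    show "leq (quot (crown n) chain2 2) ?A ?A"
      unfolding leq_quot by (rule bexI[OF bexI[OF _ a] a]) simp
    show "leq (quot (crown n) chain2 2) ?B ?B"
      unfolding leq_quot by (rule bexI[OF bexI[OF _ b] b]) simp
    show "leq (quot (crown n) chain2 2) ?A ?B"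
      unfolding leq_quot by (rule bexI[OF bexI[OF _ b] a]) simp
    show "\<not> leq (quot (crown n) chain2 2) ?B ?A"
      unfolding leq_quot by auto
  qed
  moreover have "card (carrier_of (crown n)) \<noteq> card (carrier_of chain2)"
    using assms by (simp add: card_carrier_crown)
  ultimately show ?thesis
    unfolding retractable_def by (metis poset_iso_card_eq)
qed

end
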